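(* Let $(N,\underline X)\in\aleph^{FGM*}$ with $E[X]<\infty$. For every $n\in A_N$, $$E[X_1\mid N=n]=\sum_{(i_0,i_1)\in\{0,1\}^2}f_{I_0,I_1}(i_0,i_1)\frac{\gamma_{N_{[1+i_0]}}(n)}{\gamma_N(n)}\mu_{X_{[1+i_1]}}=E[X]+\frac{\theta_{01}}{4}\frac{\gamma_{N_{[2]}}(n)-\gamma_{N_{[1]}}(n)}{\gamma_N(n)}\big(\mu_{X_{[2]}}-\mu_{X_{[1]}}\big),$$ where $f_{I_0,I_1}(i_0,i_1)=\tfrac14\big(1+(-1)^{i_0+i_1}\theta_{01}\big)$.
   Context: Collective risk model (CRM): $N$ is a random variable with values in $\mathbb{N}_0$, cdf $F_N$, pmf $\gamma_N(n)=\Pr(N=n)$ and support $A_N=\{n:\gamma_N(n)>0\}$; $\underline X=\{X_j\}_{j\ge1}$ is a sequence of identically distributed strictly positive random variables with common cdf $F_X$ (generic copy $X$). A $d$-variate FGM copula with parameters $\theta_{j_1\dots j_k}$ is $C(u_1,\dots,u_d)=\prod_{m=1}^d u_m\big(1+\sum_{k=2}^d\sum_{j_1<\dots<j_k}\theta_{j_1\dots j_k}\bar u_{j_1}\cdots\bar u_{j_k}\big)$, $\bar u=1-u$, with parameters such that $1+\sum_{k}\sum_{j_1<\dots<j_k}\theta_{j_1\dots j_k}\varepsilon_{j_1}\cdots\varepsilon_{j_k}\ge0$ for all $\varepsilon\in\{-1,1\}^d$. A CRM belongs to $\aleph^{FGM}$ if for every $k\in\mathbb{N}_1$, $k\le\sup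 A_N$, $F_{N,X_1,\dots,X_k}(n,x_1,\dots,x_k)=C_k(F_N(n),F_X(x_1),\dots,F_X(x_k))$ for a $(k+1)$-variate FGM copula $C_k$ with coordinates indexed $0,\dots,k$ (index $0$ for $N$). It belongs to $\aleph^{FGM*}$ if in addition $(N,X_1,\dots,X_k)\overset d=(N,X_{\pi(1)},\dots,X_{\pi(k)})$ for all such $k$ and all permutations $\pi$; then $\theta_{0j}=\theta_{01}$, $\theta_{ij}=\theta_{12}$, $\theta_{0ij}=\theta_{012}$ for all $1\le i<j$. For a random variable $Y$, $Y_{[1]}$, $Y_{[2]}$ denote the minimum and maximum of two iid copies of $Y$, $\mu_{Y_{[j]}}=E[Y_{[j]}]$, and $\gamma_{N_{[j]}}(n)=\Pr(N_{[j]}=n)$. *)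

theory Defs
  imports "HOL-Probability.Probability"
begin

definition fgm_valid :: "nat set \<Rightarrow> (nat set \<Rightarrow> real) \<Rightarrow> bool" where
  "fgm_valid I \<theta> \<longleftrightarrow>
     (\<forall>\<epsilon> \<in> I \<rightarrow>\<^sub>E {-1, 1::real}.
        0 \<le> 1 + (\<Sum>S \<in> {S \<in> Pow I. 2 \<le> card S}. \<theta> S * (\<Prod>j\<in>S. \<epsilon> j)))"

definition fgm_copula :: "nat set \<Rightarrow> (nat set \<Rightarrow> real) \<Rightarrow> (nat \<Rightarrow> real) \<Rightarrow> real" where
  "fgm_copula I \<theta> u =
     (\<Prod>m\<in>I. u m) * (1 + (\<Sum>S \<in> {S \<in> Pow I. 2 \<le> card S}. \<theta> S * (\<Prod>j\<in>S. 1 - u j)))"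

definition pmfN :: "'a measure \<Rightarrow> ('a \<Rightarrow> nat) \<Rightarrow> nat \<Rightarrow> real" where
  "pmfN M N n = measure M {\<omega> \<in> space M. N \<omega> = n}"

definition cdfN :: "'a measure \<Rightarrow> ('a \<Rightarrow> nat) \<Rightarrow> nat \<Rightarrow> real" where
  "cdfN M N n = measure M {\<omega> \<in> space M. N \<omega> \<le> n}"

definition cdfX :: "'a measure \<Rightarrow> (nat \<Rightarrow> 'a \<Rightarrow> real) \<Rightarrow> real \<Rightarrow> real" where
  "cdfX M X t = measure M {\<omega> \<in> space M. X 1 \<omega> \<le> t}"

definition supportN :: "'a measure \<Rightarrow> ('a \<Rightarrow> nat) \<Rightarrow> nat set" where
  "supportN M N = {n. pmfN M N n > 0}"

text \<open>Collective risk model with the stated dependence structure; theta k is the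
  parameter family of the (k+1)-variate FGM copula C_k (coordinate 0 is N).
  The condition "k \<le> sup A_N" is written as "k \<le> m for some m in A_N".\<close>

definition aleph_FGM :: "'a measure \<Rightarrow> ('a \<Rightarrow> nat) \<Rightarrow> (nat \<Rightarrow> 'a \<Rightarrow> real)
                          \<Rightarrow> (nat \<Rightarrow> nat set \<Rightarrow> real) \<Rightarrow> bool" where
  "aleph_FGM M N X \<theta> \<longleftrightarrow>
     prob_space M \<and>
     N \<in> measurable M (count_space UNIV) \<and>
     (\<forall>j\<ge>1. X j \<in> borel_measurable M) \<and>
     (\<forall>j\<ge>1. AE \<omega> in M. 0 < X j \<omega>) \<and>
     (\<forall>j\<ge>1. distr M borel (X j) = distr M borel (X 1)) \<and>
     (\<forall>k\<ge>1. (\<exists>m\<in>supportN M N. k \<le> m) \<longrightarrow>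
        fgm_valid {0..k} (\<theta> k) \<and>
        (\<forall>(n::nat) (x::nat \<Rightarrow> real).
           measure M {\<omega> \<in> space M. N \<omega> \<le> n \<and> (\<forall>j\<in>{1..k}. X j \<omega> \<le> x j)}
           = fgm_copula {0..k} (\<theta> k) (\<lambda>j. if j = 0 then cdfN M N n else cdfX M X (x j))))"

definition crm_vec :: "('a \<Rightarrow> nat) \<Rightarrow> (nat \<Rightarrow> 'a \<Rightarrow> real) \<Rightarrow> nat \<Rightarrow> 'a \<Rightarrow> nat \<Rightarrow> real" where
  "crm_vec N X k \<omega> = restrict (\<lambda>j. if j = 0 then real (N \<omega>) else X j \<omega>) {0..k}"

definition aleph_FGM_star :: "'a measure \<Rightarrow> ('a \<Rightarrow> nat) \<Rightarrow> (nat \<Rightarrow> 'a \<Rightarrow> real)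
                          \<Rightarrow> (nat \<Rightarrow> nat set \<Rightarrow> real) \<Rightarrow> bool" where
  "aleph_FGM_star M N X \<theta> \<longleftrightarrow>
     aleph_FGM M N X \<theta> \<and>
     (\<forall>k\<ge>1. (\<exists>m\<in>supportN M N. k \<le> m) \<longrightarrow>
        (\<forall>\<pi>. \<pi> permutes {1..k} \<longrightarrow>
           distr M (PiM {0..k} (\<lambda>_. borel)) (crm_vec N X k)
           = distr M (PiM {0..k} (\<lambda>_. borel)) (crm_vec N (\<lambda>j. X (\<pi> j)) k)))"

definition ord2 :: "nat \<Rightarrow> 'b::linorder \<Rightarrow> 'b \<Rightarrow> 'b" where
  "ord2 j a b = (if j = 1 then min a b else max a b)"

definition gamma_ord :: "'a measure \<Rightarrow> ('a \<Rightarrow> nat) \<Rightarrow> nat \<Rightarrow> nat \<Rightarrow> real" where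
  "gamma_ord M N j n =
     (let D = distr M (count_space UNIV) N
      in measure (D \<Otimes>\<^sub>M D) {p \<in> space (D \<Otimes>\<^sub>M D). ord2 j (fst p) (snd p) = n})"

definition mu_ord :: "'a measure \<Rightarrow> ('a \<Rightarrow> real) \<Rightarrow> nat \<Rightarrow> real" where
  "mu_ord M Y j =
     (let D = distr M borel Y in \<integral>p. ord2 j (fst p) (snd p) \<partial>(D \<Otimes>\<^sub>M D))"

definition cond_exp_N :: "'a measure \<Rightarrow> ('a \<Rightarrow> nat) \<Rightarrow> ('a \<Rightarrow> real) \<Rightarrow> nat \<Rightarrow> real" where
  "cond_exp_N M N Y n = (\<integral>\<omega>\<in>{\<omega> \<in> space M. N \<omega> = n}. Y \<omega> \<partial>M) / pmfN M N n"

end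

theory Submission
  imports Defs
begin

text \<open>
  All expectations involved are integrals of survival functions, by the layer-cake formula
  E[Y] = integral of P(Y > t) over t \<ge> 0, valid for Y \<ge> 0. Let S be the survival function
  of X, u = P(N \<le> n), v = P(N < n) and p = u - v. The bivariate FGM margin of (N, X_1) gives
  P(N = n, X_1 > t) = p S(t) - theta_01 (u (1 - u) - v (1 - v)) S(t) (1 - S(t)), while the minimum
  and the maximum of two iid copies of X have survival functions S^2 and 1 - (1 - S)^2.
  Integrating, E[X_1 | N = n] = E[X] - theta_01 (1 - u - v) (E[X] - mu_1) and mu_2 = 2 E[X] - mu_1,
  where mu_j is the mean of X_[j]. Since moreover gamma_N[1](n) = p (2 - u - v) and
  gamma_N[2](n) = p (u + v), both claimed formulas reduce to this one.
\<close>

definition survival :: "'a measure \<Rightarrow> ('a \<Rightarrow> real) \<Rightarrow> real \<Rightarrow> real" where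
  "survival M f t = measure M {x \<in> space M. t < f x}"

lemma (in finite_measure) borel_measurable_survival:
  assumes "f \<in> borel_measurable M"
  shows "survival M f \<in> borel_measurable borel"
proof -
  have "mono (\<lambda>t. - survival M f t)"
    unfolding mono_def survival_def using assms by (auto intro!: finite_measure_mono)
  then have "(\<lambda>t. - (- survival M f t)) \<in> borel_measurable borel"
    by (intro borel_measurable_uminus borel_measurable_mono)
  then show ?thesis by simp
qed

lemma (in prob_space) survival_eq_1_minus_cdf:
  assumes "f \<in> borel_measurable M"
  shows "survival M f t = 1 - measure M {x \<in> space M. f x \<le> t}"
proof -
  have "{x \<in> space M. t < f x} = space M - {x \<in> space M. f x \<le> t}" by auto
  then show ?thesis using assms by (simp add: survival_def prob_compl)
qed

lemma (in finite_measure) survival_nonneg: "0 \<le> survival M f t"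
  by (simp add: survival_def)

lemma (in prob_space) survival_le_1: "survival M f t \<le> 1"
  by (simp add: survival_def)

lemma measure_pair_measure_Times:
  assumes "sigma_finite_measure M2" "A \<in> sets M1" "B \<in> sets M2"
  shows "measure (M1 \<Otimes>\<^sub>M M2) (A \<times> B) = measure M1 A * measure M2 B"
proof -
  interpret sigma_finite_measure M2 by fact
  show ?thesis
    using assms by (simp add: measure_def emeasure_pair_measure_Times enn2real_mult)
qed

text \<open>Layer-cake formula: Tonelli applied to f x = integral of indicator {0..<f x}.\<close>

lemma (in sigma_finite_measure) nn_integral_eq_nn_integral_emeasure_greater:
  fixes f :: "'a \<Rightarrow> real"
  assumes "f \<in> borel_measurable M"
  shows "(\<integral>\<^sup>+x. ennreal (f x) \<partial>M)
     = (\<integral>\<^sup>+t. indicator {0..} t * emeasure M {x\<in>space M. t < f x} \<partial>lborel)"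
proof -
  interpret pair_sigma_finite M lborel
    by (simp add: pair_sigma_finite_def lborel.sigma_finite_measure_axioms sigma_finite_measure_axioms)
  have ennreal_eq:
      "ennreal (f x) = (\<integral>\<^sup>+t. indicator {0..} t * indicator {x\<in>space M. t < f x} x \<partial>lborel)"
    if "x \<in> space M" for x
  proof -
    have "(\<lambda>t. indicator {0..} t * indicator {x\<in>space M. t < f x} x)
        = (indicator {0..<f x} :: real \<Rightarrow> ennreal)"
      using that by (auto simp: indicator_def)
    then show ?thesis
      by (cases "0 \<le> f x") (auto simp: ennreal_neg)
  qed
  have "(\<integral>\<^sup>+x. ennreal (f x) \<partial>M)
      = (\<integral>\<^sup>+x. (\<integral>\<^sup>+t. indicator {0..} t * indicator {x\<in>space M. t < f x} x \<partial>lborel) \<partial>M)"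
    by (rule nn_integral_cong) (simp add: ennreal_eq)
  also have "\<dots>
      = (\<integral>\<^sup>+t. (\<integral>\<^sup>+x. indicator {0..} t * indicator {x\<in>space M. t < f x} x \<partial>M) \<partial>lborel)"
    by (rule Fubini'[symmetric]) (use assms in measurable)
  also have "\<dots> = (\<integral>\<^sup>+t. indicator {0..} t * emeasure M {x\<in>space M. t < f x} \<partial>lborel)"
    by (rule nn_integral_cong) (use assms in \<open>simp add: nn_integral_cmult_indicator\<close>)
  finally show ?thesis .
qed

lemma (in finite_measure) nn_integral_eq_nn_integral_survival:
  fixes f :: "'a \<Rightarrow> real"
  assumes "f \<in> borel_measurable M"
  shows "(\<integral>\<^sup>+x. ennreal (f x) \<partial>M)
      = (\<integral>\<^sup>+t. ennreal (indicator {0..} t * survival M f t) \<partial>lborel)"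
  unfolding nn_integral_eq_nn_integral_emeasure_greater[OF assms]
  by (intro nn_integral_cong)
    (use assms in \<open>auto simp: emeasure_eq_measure survival_def indicator_def\<close>)

lemma (in finite_measure) integral_eq_integral_survival:
  fixes f :: "'a \<Rightarrow> real"
  assumes f: "f \<in> borel_measurable M" and nonneg: "AE x in M. 0 \<le> f x"
  shows "integral\<^sup>L M f = (\<integral>t. indicator {0..} t * survival M f t \<partial>lborel)"
proof -
  have "integral\<^sup>L M f = enn2real (\<integral>\<^sup>+x. ennreal (f x) \<partial>M)"
    using f nonneg by (rule integral_eq_nn_integral)
  also have "\<dots> = enn2real (\<integral>\<^sup>+t. ennreal (indicator {0..} t * survival M f t) \<partial>lborel)"
    using f by (simp only: nn_integral_eq_nn_integral_survival)
  also have "\<dots> = (\<integral>t. indicator {0..} t * survival M f t \<partial>lborel)"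
    using f borel_measurable_survival[OF f] survival_nonneg
    by (intro integral_eq_nn_integral[symmetric]) auto
  finally show ?thesis .
qed

lemma (in finite_measure) integrable_survival:
  fixes f :: "'a \<Rightarrow> real"
  assumes "integrable M f"
  shows "integrable lborel (\<lambda>t. indicator {0..} t * survival M f t)"
proof (rule integrableI_nonneg)
  have f: "f \<in> borel_measurable M" using assms by simp
  show "(\<lambda>t. indicator {0..} t * survival M f t) \<in> borel_measurable lborel"
    using borel_measurable_survival[OF f] by simp
  show "AE t in lborel. 0 \<le> indicator {0..} t * survival M f t"
    using survival_nonneg by simp
  have "(\<integral>\<^sup>+t. ennreal (indicator {0..} t * survival M f t) \<partial>lborel) = (\<integral>\<^sup>+x. ennreal (f x) \<partial>M)"
    using f by (simp only: nn_integral_eq_nn_integral_survival)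
  also have "\<dots> \<le> (\<integral>\<^sup>+x. ennreal (norm (f x)) \<partial>M)"
    by (intro nn_integral_mono) (simp add: ennreal_leI)
  also have "\<dots> < \<infinity>" using assms by (simp add: integrable_iff_bounded)
  finally show "(\<integral>\<^sup>+t. ennreal (indicator {0..} t * survival M f t) \<partial>lborel) < \<infinity>" .
qed

lemma (in prob_space) integrable_survival_power2:
  fixes Y :: "'a \<Rightarrow> real"
  assumes "integrable M Y"
  shows "integrable lborel (\<lambda>t. indicator {0..} t * survival M Y t ^ 2)"
proof (rule Bochner_Integration.integrable_bound[OF integrable_survival[OF assms]])
  have Y: "Y \<in> borel_measurable M" using assms by simp
  show "(\<lambda>t. indicator {0..} t * survival M Y t ^ 2) \<in> borel_measurable lborel"
    using borel_measurable_survival[OF Y] by simp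
  have "survival M Y t ^ 2 \<le> survival M Y t" for t
    using survival_nonneg survival_le_1 by (simp add: power2_eq_square mult_left_le)
  then show "AE t in lborel. norm (indicator {0..} t * survival M Y t ^ 2)
      \<le> norm (indicator {0..} t * survival M Y t)"
    using survival_nonneg by (auto simp: indicator_def)
qed

lemma
  fixes Y :: "'a \<Rightarrow> real"
  assumes "prob_space M" and Y: "Y \<in> borel_measurable M"
  defines "D \<equiv> distr M borel Y"
  shows survival_pair_min: "survival (D \<Otimes>\<^sub>M D) (\<lambda>p. min (fst p) (snd p)) t = survival M Y t ^ 2"
    and survival_pair_max: "survival (D \<Otimes>\<^sub>M D) (\<lambda>p. max (fst p) (snd p)) t = 1 - (1 - survival M Y t) ^ 2"
proof -
  interpret prob_space M by fact
  have D: "prob_space D" unfolding D_def using Y by (rule prob_space_distr)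
  then interpret D: prob_space D .
  have sets_D: "sets D = sets borel" by (simp add: D_def)
  have space_DD: "space (D \<Otimes>\<^sub>M D) = UNIV" by (simp add: space_pair_measure D_def)
  have measure_D: "measure D A = measure M {\<omega>\<in>space M. Y \<omega> \<in> A}" if "A \<in> sets borel" for A
    unfolding D_def using that Y by (subst measure_distr) (auto simp: vimage_def Int_def conj_commute)
  have survival_D: "measure D {t<..} = survival M Y t"
    using Y by (simp add: measure_D survival_def)
  have "{p \<in> space (D \<Otimes>\<^sub>M D). t < min (fst p) (snd p)} = {t<..} \<times> {t<..}"
    by (auto simp: space_DD)
  then show "survival (D \<Otimes>\<^sub>M D) (\<lambda>p. min (fst p) (snd p)) t = survival M Y t ^ 2"
    by (simp add: survival_def measure_pair_measure_Times D.sigma_finite_measure_axioms sets_D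
        survival_D power2_eq_square)
  interpret DD: prob_space "D \<Otimes>\<^sub>M D" using D D by (rule prob_space_pair)
  have "{p \<in> space (D \<Otimes>\<^sub>M D). t < max (fst p) (snd p)} = space (D \<Otimes>\<^sub>M D) - {..t} \<times> {..t}"
    by (auto simp: space_DD)
  moreover have "measure D {..t} = 1 - survival M Y t"
    using Y by (simp add: measure_D survival_eq_1_minus_cdf)
  ultimately show "survival (D \<Otimes>\<^sub>M D) (\<lambda>p. max (fst p) (snd p)) t = 1 - (1 - survival M Y t) ^ 2"
    by (simp add: survival_def[of "D \<Otimes>\<^sub>M D"] DD.prob_compl measure_pair_measure_Times
        D.sigma_finite_measure_axioms sets_D power2_eq_square)
qed

lemma
  fixes Y :: "'a \<Rightarrow> real"
  assumes "prob_space M" and Y: "Y \<in> borel_measurable M" and nonneg: "AE \<omega> in M. 0 \<le> Y \<omega>"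
  shows mu_ord_min_eq_integral_survival:
      "mu_ord M Y 1 = (\<integral>t. indicator {0..} t * survival M Y t ^ 2 \<partial>lborel)"
    and mu_ord_max_eq_integral_survival:
      "mu_ord M Y 2 = (\<integral>t. indicator {0..} t * (1 - (1 - survival M Y t) ^ 2) \<partial>lborel)"
proof -
  interpret prob_space M by fact
  define D where "D = distr M borel Y"
  have D: "prob_space D" unfolding D_def using Y by (rule prob_space_distr)
  interpret DD: prob_space "D \<Otimes>\<^sub>M D" using D D by (rule prob_space_pair)
  interpret pair_sigma_finite D D
    by (simp add: pair_sigma_finite_def D prob_space_imp_sigma_finite)
  have sets_D[measurable_cong]: "sets D = sets borel" by (simp add: D_def)
  have "AE x in D. 0 \<le> x"
    using nonneg Y unfolding D_def by (subst AE_distr_iff) auto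
  then have nonneg_DD: "AE p in D \<Otimes>\<^sub>M D. 0 \<le> fst p \<and> 0 \<le> snd p"
    by (intro AE_pair_measure) (auto elim: AE_mp)
  have "mu_ord M Y 1 = (\<integral>t. indicator {0..} t * survival (D \<Otimes>\<^sub>M D) (\<lambda>p. min (fst p) (snd p)) t \<partial>lborel)"
    unfolding mu_ord_def Let_def ord2_def D_def[symmetric]
    using nonneg_DD by (simp, intro DD.integral_eq_integral_survival) auto
  then show "mu_ord M Y 1 = (\<integral>t. indicator {0..} t * survival M Y t ^ 2 \<partial>lborel)"
    by (simp add: survival_pair_min[OF prob_space_axioms Y, folded D_def])
  have "mu_ord M Y 2 = (\<integral>t. indicator {0..} t * survival (D \<Otimes>\<^sub>M D) (\<lambda>p. max (fst p) (snd p)) t \<partial>lborel)"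
    unfolding mu_ord_def Let_def ord2_def D_def[symmetric]
    using nonneg_DD by (simp, intro DD.integral_eq_integral_survival) (auto elim: AE_mp)
  then show "mu_ord M Y 2 = (\<integral>t. indicator {0..} t * (1 - (1 - survival M Y t) ^ 2) \<partial>lborel)"
    by (simp add: survival_pair_max[OF prob_space_axioms Y, folded D_def])
qed

lemma (in prob_space) mu_ord_max_eq:
  fixes Y :: "'a \<Rightarrow> real"
  assumes Y: "integrable M Y" and nonneg: "AE \<omega> in M. 0 \<le> Y \<omega>"
  shows "mu_ord M Y 2 = 2 * expectation Y - mu_ord M Y 1"
proof -
  have Ym: "Y \<in> borel_measurable M" using Y by simp
  have "(\<lambda>t. indicator {0..} t * (1 - (1 - survival M Y t) ^ 2))
      = (\<lambda>t. 2 * (indicator {0..} t * survival M Y t) - indicator {0..} t * survival M Y t ^ 2)"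
    by (auto simp: algebra_simps power2_eq_square)
  then show ?thesis
    unfolding mu_ord_max_eq_integral_survival[OF prob_space_axioms Ym nonneg]
      mu_ord_min_eq_integral_survival[OF prob_space_axioms Ym nonneg]
      integral_eq_integral_survival[OF Ym nonneg]
    using integrable_survival[OF Y] integrable_survival_power2[OF Y] by simp
qed

lemma (in prob_space) pmfN_eq_cdfN_diff:
  assumes [measurable]: "N \<in> measurable M (count_space UNIV)"
  shows "pmfN M N n = cdfN M N n - measure M {\<omega>\<in>space M. N \<omega> < n}"
proof -
  have "{\<omega>\<in>space M. N \<omega> = n} = {\<omega>\<in>space M. N \<omega> \<le> n} - {\<omega>\<in>space M. N \<omega> < n}" by auto
  then show ?thesis
    unfolding pmfN_def cdfN_def by (simp add: finite_measure_Diff subset_eq)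
qed

lemma
  fixes N :: "'a \<Rightarrow> nat" and n :: nat
  assumes "prob_space M" and N: "N \<in> measurable M (count_space UNIV)"
  defines "v \<equiv> measure M {\<omega>\<in>space M. N \<omega> < n}"
  shows gamma_ord_min: "gamma_ord M N 1 n = pmfN M N n * (2 - cdfN M N n - v)"
    and gamma_ord_max: "gamma_ord M N 2 n = pmfN M N n * (cdfN M N n + v)"
proof -
  interpret prob_space M by fact
  define D where "D = distr M (count_space UNIV) N"
  have D: "prob_space D" unfolding D_def using N by (rule prob_space_distr)
  then interpret D: prob_space D .
  interpret DD: prob_space "D \<Otimes>\<^sub>M D" using D D by (rule prob_space_pair)
  have sets_D: "A \<in> sets D" for A by (simp add: D_def)
  have space_D: "space D = UNIV" by (simp add: D_def)
  have space_DD: "space (D \<Otimes>\<^sub>M D) = UNIV" by (simp add: space_pair_measure D_def)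
  have measure_D: "measure D A = measure M {\<omega>\<in>space M. N \<omega> \<in> A}" for A
    unfolding D_def using N by (subst measure_distr) (auto simp: vimage_def Int_def conj_commute)
  have measure_DD: "measure (D \<Otimes>\<^sub>M D) (A \<times> B) = measure D A * measure D B" for A B
    by (simp add: measure_pair_measure_Times D.sigma_finite_measure_axioms sets_D)
  have D_le: "measure D {..n} = cdfN M N n" and D_less: "measure D {..<n} = v"
    and D_eq: "measure D {n} = pmfN M N n"
    by (simp_all add: measure_D cdfN_def pmfN_def v_def)
  have D_ge: "measure D {n..} = 1 - v" and D_greater: "measure D {n<..} = 1 - cdfN M N n"
    using D.prob_compl[of "{..<n}"] D.prob_compl[of "{..n}"]
    by (simp_all add: sets_D space_D D_le D_less Compl_eq_Diff_UNIV[symmetric])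
  have "{p \<in> space (D \<Otimes>\<^sub>M D). ord2 1 (fst p) (snd p) = n} = {n} \<times> {n..} \<union> {n<..} \<times> {n}"
    by (auto simp: space_DD ord2_def min_def)
  then have "gamma_ord M N 1 n
      = measure (D \<Otimes>\<^sub>M D) ({n} \<times> {n..}) + measure (D \<Otimes>\<^sub>M D) ({n<..} \<times> {n})"
    unfolding gamma_ord_def Let_def D_def[symmetric]
    by (simp, intro DD.finite_measure_Union) (auto simp: sets_D)
  then show "gamma_ord M N 1 n = pmfN M N n * (2 - cdfN M N n - v)"
    by (simp add: measure_DD D_eq D_ge D_greater algebra_simps)
  have "{p \<in> space (D \<Otimes>\<^sub>M D). ord2 2 (fst p) (snd p) = n} = {n} \<times> {..n} \<union> {..<n} \<times> {n}"
    by (auto simp: space_DD ord2_def max_def)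
  then have "gamma_ord M N 2 n
      = measure (D \<Otimes>\<^sub>M D) ({n} \<times> {..n}) + measure (D \<Otimes>\<^sub>M D) ({..<n} \<times> {n})"
    unfolding gamma_ord_def Let_def D_def[symmetric]
    by (simp, intro DD.finite_measure_Union) (auto simp: sets_D)
  then show "gamma_ord M N 2 n = pmfN M N n * (cdfN M N n + v)"
    by (simp add: measure_DD D_eq D_le D_less algebra_simps)
qed

lemma (in prob_space) AE_in_supportN:
  assumes [measurable]: "N \<in> measurable M (count_space UNIV)"
  shows "AE \<omega> in M. N \<omega> \<in> supportN M N"
proof -
  have "AE \<omega> in M. N \<omega> \<noteq> k" if "k \<notin> supportN M N" for k
  proof -
    have "measure M {\<omega>\<in>space M. N \<omega> = k} = 0"
      using that measure_nonneg[of M "{\<omega>\<in>space M. N \<omega> = k}"] by (simp add: supportN_def pmfN_def)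
    then show ?thesis
      by (subst AE_iff_measurable[OF _ refl]) (auto simp: emeasure_eq_measure)
  qed
  then have "AE \<omega> in M. \<forall>k. k \<notin> supportN M N \<longrightarrow> N \<omega> \<noteq> k"
    by (subst AE_all_countable) (auto intro: AE_I2)
  then show ?thesis by eventually_elim blast
qed

lemma aleph_FGM_D:
  assumes "aleph_FGM M N X \<theta>"
  shows "prob_space M" "N \<in> measurable M (count_space UNIV)" "X 1 \<in> borel_measurable M"
    and "AE \<omega> in M. 0 \<le> X 1 \<omega>"
  using assms unfolding aleph_FGM_def by (auto elim!: eventually_mono)

lemma fgm_copula_bivariate:
  "fgm_copula {0..1} \<theta> (\<lambda>j. if j = 0 then a else b) = a * b * (1 + \<theta> {0, 1} * (1 - a) * (1 - b))"
proof -
  have pair: "{0..1::nat} = {0, 1}" by auto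
  have "S = {0, 1}" if "S \<subseteq> {0, 1::nat}" "2 \<le> card S" for S
    using card_seteq[OF _ that(1)] that(2) by simp
  then have "{S \<in> Pow {0..1::nat}. 2 \<le> card S} = {{0, 1}}"
    unfolding pair by auto
  then show ?thesis by (simp add: fgm_copula_def pair)
qed

lemma aleph_FGM_joint_cdf:
  assumes "aleph_FGM M N X \<theta>"
  shows "measure M {\<omega>\<in>space M. N \<omega> \<le> m \<and> X 1 \<omega> \<le> t}
      = cdfN M N m * cdfX M X t * (1 + \<theta> 1 {0, 1} * (1 - cdfN M N m) * (1 - cdfX M X t))"
proof (cases "\<exists>k\<in>supportN M N. 1 \<le> k")
  case True
  then have "\<forall>m (x :: nat \<Rightarrow> real).
      measure M {\<omega>\<in>space M. N \<omega> \<le> m \<and> (\<forall>j\<in>{1..1}. X j \<omega> \<le> x j)}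
      = fgm_copula {0..1} (\<theta> 1) (\<lambda>j. if j = 0 then cdfN M N m else cdfX M X (x j))"
    using assms unfolding aleph_FGM_def by auto
  from this[rule_format, of m "\<lambda>_. t"] show ?thesis
    using fgm_copula_bivariate[of "\<theta> 1" "cdfN M N m" "cdfX M X t"] by simp
next
  case False
  \<comment> \<open>N = 0 almost surely: the copula hypothesis is vacuous, but F_N \<equiv> 1 makes the claim trivial.\<close>
  interpret prob_space M using aleph_FGM_D[OF assms] by simp
  note [measurable] = aleph_FGM_D(2,3)[OF assms] aleph_FGM_D(3)[OF assms, simplified]
  have "AE \<omega> in M. N \<omega> \<le> m"
    using AE_in_supportN[OF aleph_FGM_D(2)[OF assms]]
    by eventually_elim (use False in \<open>auto simp: not_le\<close>)
  then have "cdfN M N m = 1"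
    and "measure M {\<omega>\<in>space M. N \<omega> \<le> m \<and> X 1 \<omega> \<le> t} = cdfX M X t"
    unfolding cdfN_def cdfX_def
    by (auto simp: prob_Collect_eq_1 intro!: finite_measure_eq_AE)
  then show ?thesis by simp
qed

lemma aleph_FGM_joint_cdf_less:
  fixes n :: nat
  assumes FGM: "aleph_FGM M N X \<theta>"
  defines "v \<equiv> measure M {\<omega>\<in>space M. N \<omega> < n}"
  shows "measure M {\<omega>\<in>space M. N \<omega> < n \<and> X 1 \<omega> \<le> t}
      = v * cdfX M X t * (1 + \<theta> 1 {0, 1} * (1 - v) * (1 - cdfX M X t))"
proof (cases n)
  case (Suc m)
  then have "{\<omega>\<in>space M. N \<omega> < n \<and> X 1 \<omega> \<le> t} = {\<omega>\<in>space M. N \<omega> \<le> m \<and> X 1 \<omega> \<le> t}"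
    and "v = cdfN M N m"
    by (auto simp: v_def cdfN_def less_Suc_eq_le)
  then show ?thesis by (simp only: aleph_FGM_joint_cdf[OF FGM])
qed (simp add: v_def)

lemma aleph_FGM_measure_eq_greater:
  fixes n :: nat and t :: real
  assumes FGM: "aleph_FGM M N X \<theta>"
  defines "u \<equiv> cdfN M N n" and "v \<equiv> measure M {\<omega>\<in>space M. N \<omega> < n}"
    and "S \<equiv> survival M (X 1) t"
  shows "measure M {\<omega>\<in>space M. N \<omega> = n \<and> t < X 1 \<omega>}
      = (u - v) * S - \<theta> 1 {0, 1} * (u * (1 - u) - v * (1 - v)) * S * (1 - S)"
proof -
  interpret prob_space M using aleph_FGM_D[OF FGM] by simp
  note [measurable] = aleph_FGM_D(2,3)[OF FGM] aleph_FGM_D(3)[OF FGM, simplified]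
  have "{\<omega>\<in>space M. N \<omega> = n \<and> X 1 \<omega> \<le> t}
      = {\<omega>\<in>space M. N \<omega> \<le> n \<and> X 1 \<omega> \<le> t} - {\<omega>\<in>space M. N \<omega> < n \<and> X 1 \<omega> \<le> t}"
    by auto
  then have joint_eq: "measure M {\<omega>\<in>space M. N \<omega> = n \<and> X 1 \<omega> \<le> t}
      = measure M {\<omega>\<in>space M. N \<omega> \<le> n \<and> X 1 \<omega> \<le> t}
        - measure M {\<omega>\<in>space M. N \<omega> < n \<and> X 1 \<omega> \<le> t}"
    by (simp add: finite_measure_Diff subset_eq)
  have "{\<omega>\<in>space M. N \<omega> = n \<and> t < X 1 \<omega>}
      = {\<omega>\<in>space M. N \<omega> = n} - {\<omega>\<in>space M. N \<omega> = n \<and> X 1 \<omega> \<le> t}"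
    by auto
  then have "measure M {\<omega>\<in>space M. N \<omega> = n \<and> t < X 1 \<omega>}
      = pmfN M N n - measure M {\<omega>\<in>space M. N \<omega> = n \<and> X 1 \<omega> \<le> t}"
    unfolding pmfN_def by (simp add: finite_measure_Diff subset_eq)
  moreover have "cdfX M X t = 1 - S"
    unfolding S_def cdfX_def by (simp add: survival_eq_1_minus_cdf)
  ultimately show ?thesis
    unfolding joint_eq aleph_FGM_joint_cdf[OF FGM] aleph_FGM_joint_cdf_less[OF FGM]
      pmfN_eq_cdfN_diff[OF aleph_FGM_D(2)[OF FGM]] u_def[symmetric] v_def[symmetric]
    by (simp add: algebra_simps)
qed

lemma aleph_FGM_set_integral_eq:
  fixes n :: nat
  assumes FGM: "aleph_FGM M N X \<theta>" and int: "integrable M (X 1)"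
  defines "u \<equiv> cdfN M N n" and "v \<equiv> measure M {\<omega>\<in>space M. N \<omega> < n}"
  shows "(\<integral>\<omega>\<in>{\<omega>\<in>space M. N \<omega> = n}. X 1 \<omega> \<partial>M)
      = (u - v) * integral\<^sup>L M (X 1)
        - \<theta> 1 {0, 1} * (u * (1 - u) - v * (1 - v)) * (integral\<^sup>L M (X 1) - mu_ord M (X 1) 1)"
proof -
  interpret prob_space M using aleph_FGM_D[OF FGM] by simp
  note [measurable] = aleph_FGM_D(2,3)[OF FGM] aleph_FGM_D(3)[OF FGM, simplified]
  define A where "A = {\<omega>\<in>space M. N \<omega> = n}"
  define c where "c = \<theta> 1 {0, 1} * (u * (1 - u) - v * (1 - v))"
  let ?S = "survival M (X 1)"
  note nonneg = aleph_FGM_D(4)[OF FGM]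
  have "survival M (\<lambda>\<omega>. indicator A \<omega> *\<^sub>R X 1 \<omega>) t = (u - v) * ?S t - c * (?S t - ?S t ^ 2)"
    if "0 \<le> t" for t
  proof -
    have "{\<omega>\<in>space M. t < indicator A \<omega> *\<^sub>R X 1 \<omega>} = {\<omega>\<in>space M. N \<omega> = n \<and> t < X 1 \<omega>}"
      using that by (auto simp: A_def indicator_def)
    then have "survival M (\<lambda>\<omega>. indicator A \<omega> *\<^sub>R X 1 \<omega>) t
        = measure M {\<omega>\<in>space M. N \<omega> = n \<and> t < X 1 \<omega>}"
      by (simp only: survival_def)
    also have "\<dots> = (u - v) * ?S t - c * (?S t - ?S t ^ 2)"
      unfolding aleph_FGM_measure_eq_greater[OF FGM] u_def v_def c_def
      by (simp add: algebra_simps power2_eq_square)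
    finally show ?thesis .
  qed
  then have "(\<lambda>t. indicator {0..} t * survival M (\<lambda>\<omega>. indicator A \<omega> *\<^sub>R X 1 \<omega>) t)
      = (\<lambda>t. (u - v) * (indicator {0..} t * ?S t)
          - c * (indicator {0..} t * ?S t - indicator {0..} t * ?S t ^ 2))"
    by (auto simp: indicator_def algebra_simps)
  moreover have "(\<integral>\<omega>\<in>A. X 1 \<omega> \<partial>M)
      = (\<integral>t. indicator {0..} t * survival M (\<lambda>\<omega>. indicator A \<omega> *\<^sub>R X 1 \<omega>) t \<partial>lborel)"
    unfolding set_lebesgue_integral_def
    by (intro integral_eq_integral_survival) (use nonneg in \<open>auto simp: A_def\<close>)
  ultimately show ?thesis
    unfolding integral_eq_integral_survival[OF aleph_FGM_D(3)[OF FGM] nonneg]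
      mu_ord_min_eq_integral_survival[OF prob_space_axioms aleph_FGM_D(3)[OF FGM] nonneg]
    using integrable_survival[OF int] integrable_survival_power2[OF int]
    by (simp add: A_def c_def)
qed

lemma sum_pairs_01:
  fixes g :: "nat \<times> nat \<Rightarrow> real"
  shows "(\<Sum>p \<in> {0, 1} \<times> {0, 1}. g p) = g (0, 0) + g (0, 1) + g (1, 0) + g (1, 1)"
proof -
  have "{0, 1::nat} \<times> {0, 1::nat} = {(0, 0), (0, 1), (1, 0), (1, 1)}" by auto
  then show ?thesis by simp
qed

theorem mainTheorem4:
  fixes M :: "'a measure" and N :: "'a \<Rightarrow> nat" and X :: "nat \<Rightarrow> 'a \<Rightarrow> real"
    and \<theta> :: "nat \<Rightarrow> nat set \<Rightarrow> real" and n :: nat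
  assumes "aleph_FGM_star M N X \<theta>"
    and "integrable M (X 1)"
    and "n \<in> supportN M N"
  shows "cond_exp_N M N (X 1) n
           = (\<Sum>(i0, i1) \<in> {0, 1::nat} \<times> {0, 1::nat}.
                (1/4) * (1 + (-1) ^ (i0 + i1) * \<theta> 1 {0, 1})
                * (gamma_ord M N (1 + i0) n / pmfN M N n) * mu_ord M (X 1) (1 + i1))
       \<and> cond_exp_N M N (X 1) n
           = integral\<^sup>L M (X 1)
             + \<theta> 1 {0, 1} / 4 * ((gamma_ord M N 2 n - gamma_ord M N 1 n) / pmfN M N n)
               * (mu_ord M (X 1) 2 - mu_ord M (X 1) 1)"
proof -
  have FGM: "aleph_FGM M N X \<theta>" using assms(1) unfolding aleph_FGM_star_def by blast
  interpret prob_space M using aleph_FGM_D[OF FGM] by simp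
  define u where "u = cdfN M N n"
  define v where "v = measure M {\<omega>\<in>space M. N \<omega> < n}"
  define E where "E = integral\<^sup>L M (X 1)"
  define m1 where "m1 = mu_ord M (X 1) 1"
  note nonneg = aleph_FGM_D(4)[OF FGM]
  have pmf: "pmfN M N n = u - v"
    unfolding u_def v_def by (rule pmfN_eq_cdfN_diff[OF aleph_FGM_D(2)[OF FGM]])
  have pos: "u - v > 0" using assms(3) by (simp add: supportN_def pmf)
  have cond: "cond_exp_N M N (X 1) n = E - \<theta> 1 {0, 1} * (1 - u - v) * (E - m1)"
    unfolding cond_exp_N_def aleph_FGM_set_integral_eq[OF FGM assms(2)] pmf
      u_def[symmetric] v_def[symmetric] E_def[symmetric] m1_def[symmetric]
    using pos by (simp add: field_simps)
  have gamma: "gamma_ord M N 1 n / pmfN M N n = 2 - u - v" "gamma_ord M N 2 n / pmfN M N n = u + v"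
    unfolding gamma_ord_min[OF prob_space_axioms aleph_FGM_D(2)[OF FGM]]
      gamma_ord_max[OF prob_space_axioms aleph_FGM_D(2)[OF FGM]] pmf u_def[symmetric] v_def[symmetric]
    using pos by simp_all
  have mu: "mu_ord M (X 1) 2 = 2 * E - m1"
    unfolding E_def m1_def by (rule mu_ord_max_eq[OF assms(2) nonneg])
  show ?thesis
    unfolding sum_pairs_01 prod.case add_0_right one_add_one diff_divide_distrib gamma mu cond
      E_def[symmetric] m1_def[symmetric]
    by (simp add: field_simps)
qed

end
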